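(* For every positive integer $k$, there exist a finite simple undirected graph $G$ and an orientation $\vec{G}$ of $G$ such that $\operatorname{adim}(G)\geq\operatorname{bdim}(G)=2^k+k-1$ and $k\geq\operatorname{adim}(\vec{G})\geq\operatorname{bdim}(\vec{G})$.
   Context: An orientation of $G$ is a directed graph obtained by assigning a direction to each edge of $G$. In an undirected graph, $d(u,v)$ is the shortest-path distance; in a directed graph, $d(u,v)$ is the length of a shortest directed path from $u$ to $v$; in both cases $d(u,v)=\infty$ if no such path exists. For a nonnegative integer $k$, $d_k(u,v)=\min(d(u,v),k+1)$. A function $f:V\to\mathbb{Z}_{\geq 0}$ is a resolving broadcast if for any distinct vertices $x,y$ there is $z$ with $f(z)>0$ and $d_{f(z)}(z,x)\neq d_{f(z)}(z,y)$. The broadcast dimension $\operatorname{bdim}$ is the minimum of $\sum_v f(v)$ over resolving broadcasts $f$. A set $A$ of vertices is an adjacency resolving set if for any distinct $x,y$ there is $z\in A$ with $d_1(z,x)\neq d_1(z,y)$; the adjacency dimension $\operatorname{adim}$ is the minimum cardinality of such a set. *)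

theory Defs
  imports Main "HOL-Library.Extended_Nat"
begin

text \<open>An undirected graph is a symmetric irreflexive relation; then
directed distance in R coincides with the usual shortest-path distance.\<close>

definition simple_graph :: "nat set \<Rightarrow> (nat \<Rightarrow> nat \<Rightarrow> bool) \<Rightarrow> bool" where
  "simple_graph V E \<longleftrightarrow> finite V \<and> (\<forall>u v. E u v \<longrightarrow> u \<in> V \<and> v \<in> V)
     \<and> (\<forall>u. \<not> E u u) \<and> (\<forall>u v. E u v \<longrightarrow> E v u)"

definition orientation :: "(nat \<Rightarrow> nat \<Rightarrow> bool) \<Rightarrow> (nat \<Rightarrow> nat \<Rightarrow> bool) \<Rightarrow> bool" where
  "orientation E D \<longleftrightarrow> (\<forall>u v. D u v \<longrightarrow> E u v)
     \<and> (\<forall>u v. E u v \<longrightarrow> (D u v \<longleftrightarrow> \<not> D v u))"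

definition dist :: "(nat \<Rightarrow> nat \<Rightarrow> bool) \<Rightarrow> nat \<Rightarrow> nat \<Rightarrow> enat" where
  "dist R u v = Inf {enat n | n. (R ^^ n) u v}"

definition dist_trunc :: "(nat \<Rightarrow> nat \<Rightarrow> bool) \<Rightarrow> nat \<Rightarrow> nat \<Rightarrow> nat \<Rightarrow> enat" where
  "dist_trunc R k u v = min (dist R u v) (enat (k + 1))"

definition resolving_broadcast :: "nat set \<Rightarrow> (nat \<Rightarrow> nat \<Rightarrow> bool) \<Rightarrow> (nat \<Rightarrow> nat) \<Rightarrow> bool" where
  "resolving_broadcast V R f \<longleftrightarrow>
     (\<forall>x\<in>V. \<forall>y\<in>V. x \<noteq> y \<longrightarrow>
        (\<exists>z\<in>V. f z > 0 \<and> dist_trunc R (f z) z x \<noteq> dist_trunc R (f z) z y))"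

definition bdim :: "nat set \<Rightarrow> (nat \<Rightarrow> nat \<Rightarrow> bool) \<Rightarrow> nat" where
  "bdim V R = Inf {(\<Sum>v\<in>V. f v) | f. resolving_broadcast V R f}"

definition adjacency_resolving :: "nat set \<Rightarrow> (nat \<Rightarrow> nat \<Rightarrow> bool) \<Rightarrow> nat set \<Rightarrow> bool" where
  "adjacency_resolving V R A \<longleftrightarrow> A \<subseteq> V \<and>
     (\<forall>x\<in>V. \<forall>y\<in>V. x \<noteq> y \<longrightarrow> (\<exists>z\<in>A. dist_trunc R 1 z x \<noteq> dist_trunc R 1 z y))"

definition adim :: "nat set \<Rightarrow> (nat \<Rightarrow> nat \<Rightarrow> bool) \<Rightarrow> nat" where
  "adim V R = Inf {card A | A. adjacency_resolving V R A}"

end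

theory Submission
  imports Defs
begin

text \<open>In the complete graph \<open>K\<^sub>n\<close> two vertices that broadcast nothing are at distance 1 from
every broadcasting vertex, hence unresolved; so all but one vertex must broadcast and
\<open>bdim K\<^sub>n = n - 1\<close>, while \<open>adim \<ge> bdim\<close> holds in general. For \<open>n = 2\<^sup>k + k\<close> orient \<open>K\<^sub>n\<close> so that
\<open>k\<close> "bit" vertices \<open>a < k\<close> send an arc to the vertex \<open>k + m\<close> exactly when bit \<open>a\<close> of \<open>m\<close> is set.
Distinct codes \<open>m\<close> differ in some bit, so the bit vertices alone form an adjacency
resolving set of the orientation.\<close>

lemma dist_self [simp]: "dist R u u = 0"
proof -
  have "dist R u u \<le> 0"
    unfolding dist_def zero_enat_def by (rule Inf_lower) auto
  then show ?thesis by simp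
qed

lemma dist_ge_2_if_not_adjacent:
  assumes "u \<noteq> v" "\<not> R u v"
  shows "dist R u v \<ge> 2"
  unfolding dist_def
proof (rule Inf_greatest)
  fix x assume "x \<in> {enat n | n. (R ^^ n) u v}"
  then obtain n where "x = enat n" "(R ^^ n) u v" by auto
  moreover from assms this(2) have "n \<noteq> 0" by (cases n) auto
  moreover from assms \<open>(R ^^ n) u v\<close> have "n \<noteq> 1" by auto
  ultimately show "2 \<le> x" by (simp add: numeral_eq_enat)
qed

lemma dist_ge_1_if_neq:
  assumes "u \<noteq> v"
  shows "dist R u v \<ge> 1"
  unfolding dist_def
proof (rule Inf_greatest)
  fix x assume "x \<in> {enat n | n. (R ^^ n) u v}"
  then obtain n where "x = enat n" "(R ^^ n) u v" by auto
  moreover from assms this(2) have "n \<noteq> 0" by (cases n) auto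
  ultimately show "1 \<le> x" by (simp add: one_enat_def)
qed

lemma dist_eq_1_if_adjacent:
  assumes "u \<noteq> v" "R u v"
  shows "dist R u v = 1"
proof (rule order.antisym)
  show "dist R u v \<le> 1"
    unfolding dist_def one_enat_def by (rule Inf_lower) (use assms(2) in auto)
qed (rule dist_ge_1_if_neq[OF assms(1)])

lemma dist_trunc_1:
  "dist_trunc R 1 u v = (if u = v then 0 else if R u v then 1 else 2)"
proof -
  have "enat (1 + 1) = 2" by (simp add: numeral_eq_enat)
  then show ?thesis
    using dist_eq_1_if_adjacent[of u v R] dist_ge_2_if_not_adjacent[of u v R]
    by (auto simp: dist_trunc_def min_def)
qed

declare dist_trunc_1 [unfolded One_nat_def, simp]

lemma dist_trunc_1_distinguishes_self:
  assumes "x \<noteq> y"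
  shows "dist_trunc R 1 x x \<noteq> dist_trunc R 1 x y"
  using assms by simp

lemma bdim_le:
  assumes "resolving_broadcast V R f"
  shows "bdim V R \<le> (\<Sum>v\<in>V. f v)"
  unfolding bdim_def by (rule wellorder_Inf_le1) (use assms in blast)

lemma bdim_ge:
  assumes "resolving_broadcast V R f"
    and "\<And>g. resolving_broadcast V R g \<Longrightarrow> m \<le> (\<Sum>v\<in>V. g v)"
  shows "m \<le> bdim V R"
proof -
  have "bdim V R \<in> {(\<Sum>v\<in>V. g v) | g. resolving_broadcast V R g}"
    unfolding bdim_def by (rule Inf_nat_def1) (use assms(1) in blast)
  then obtain g where "resolving_broadcast V R g" "bdim V R = (\<Sum>v\<in>V. g v)" by blast
  with assms(2) show ?thesis by simp
qed

lemma adim_le: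
  assumes "adjacency_resolving V R A"
  shows "adim V R \<le> card A"
  unfolding adim_def by (rule wellorder_Inf_le1) (use assms in blast)

lemma adjacency_resolving_self: "adjacency_resolving V R V"
  unfolding adjacency_resolving_def using dist_trunc_1_distinguishes_self by blast

lemma adim_attained: "\<exists>A. adjacency_resolving V R A \<and> adim V R = card A"
proof -
  have "adim V R \<in> {card A | A. adjacency_resolving V R A}"
    unfolding adim_def by (rule Inf_nat_def1) (use adjacency_resolving_self in blast)
  then show ?thesis by blast
qed

lemma resolving_broadcast_indicator:
  assumes "adjacency_resolving V R A"
  shows "resolving_broadcast V R (\<lambda>v. if v \<in> A then 1 else 0)"
  using assms unfolding adjacency_resolving_def resolving_broadcast_def by fastforce

lemma bdim_le_adim:
  assumes "finite V"
  shows "bdim V R \<le> adim V R"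
proof -
  obtain A where A: "adjacency_resolving V R A" "adim V R = card A"
    using adim_attained by blast
  then have "A \<subseteq> V" unfolding adjacency_resolving_def by blast
  then have "(\<Sum>v\<in>V. if v \<in> A then 1 else 0) = card A"
    using assms by (simp add: sum.If_cases Int_absorb1)
  with bdim_le[OF resolving_broadcast_indicator[OF A(1)]] A(2) show ?thesis by simp
qed

lemma resolving_broadcast_all_but_one:
  "resolving_broadcast V R (\<lambda>v. if v = w then 0 else 1)"
  unfolding resolving_broadcast_def
proof (intro ballI impI)
  fix x y assume "x \<in> V" "y \<in> V" "x \<noteq> y"
  then obtain z where "z \<in> V" "z \<noteq> w" "z = x \<or> z = y" by blast
  with \<open>x \<noteq> y\<close> show "\<exists>z\<in>V. (if z = w then 0 else 1) > (0::nat) \<and>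
      dist_trunc R (if z = w then 0 else 1) z x \<noteq> dist_trunc R (if z = w then 0 else 1) z y"
    by (intro bexI[of _ z]) auto
qed

lemma bdim_le_card_minus_1:
  assumes "finite V" "w \<in> V"
  shows "bdim V R \<le> card V - 1"
proof -
  have "(\<Sum>v\<in>V. if v = w then 0 else 1) = card (V - {w})"
    using assms(1) by (simp add: sum.If_cases Diff_eq)
  also have "\<dots> = card V - 1"
    using assms by simp
  finally show ?thesis
    using bdim_le[OF resolving_broadcast_all_but_one, of V R w] by simp
qed

definition complete_graph :: "nat \<Rightarrow> nat \<Rightarrow> nat \<Rightarrow> bool" where
  "complete_graph n u v \<longleftrightarrow> u < n \<and> v < n \<and> u \<noteq> v"

lemma simple_graph_complete_graph: "simple_graph {..<n} (complete_graph n)"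
  unfolding simple_graph_def complete_graph_def by auto

lemma resolving_broadcast_complete_graph_silent_unique:
  assumes f: "resolving_broadcast {..<n} (complete_graph n) f"
    and "x < n" "y < n" "f x = 0" "f y = 0"
  shows "x = y"
proof (rule ccontr)
  assume "x \<noteq> y"
  with assms obtain z where z: "z < n" "f z > 0"
    "dist_trunc (complete_graph n) (f z) z x \<noteq> dist_trunc (complete_graph n) (f z) z y"
    unfolding resolving_broadcast_def by blast
  with assms have "dist (complete_graph n) z x = 1" "dist (complete_graph n) z y = 1"
    by (auto intro!: dist_eq_1_if_adjacent simp: complete_graph_def)
  with z(3) show False by (simp add: dist_trunc_def)
qed

lemma bdim_complete_graph:
  assumes "0 < n"
  shows "bdim {..<n} (complete_graph n) = n - 1"
proof (rule order.antisym)
  show "bdim {..<n} (complete_graph n) \<le> n - 1"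
    using bdim_le_card_minus_1[of "{..<n}" 0] assms by simp
next
  show "n - 1 \<le> bdim {..<n} (complete_graph n)"
  proof (rule bdim_ge[OF resolving_broadcast_all_but_one])
    fix g assume g: "resolving_broadcast {..<n} (complete_graph n) g"
    define S where "S = {v \<in> {..<n}. g v = 0}"
    have "card S \<le> 1"
      using resolving_broadcast_complete_graph_silent_unique[OF g]
      by (auto simp: S_def card_le_Suc0_iff_eq)
    moreover have "S \<subseteq> {..<n}" "finite S" by (auto simp: S_def)
    ultimately have "n - 1 \<le> card ({..<n} - S)"
      by (simp add: card_Diff_subset)
    also have "\<dots> = (\<Sum>v\<in>{..<n} - S. 1)" by simp
    also have "\<dots> \<le> (\<Sum>v\<in>{..<n} - S. g v)"
      by (rule sum_mono) (auto simp: S_def)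
    also have "\<dots> \<le> (\<Sum>v\<in>{..<n}. g v)"
      by (rule sum_mono2) auto
    finally show "n - 1 \<le> (\<Sum>v\<in>{..<n}. g v)" .
  qed
qed

definition bit_tournament :: "nat \<Rightarrow> nat \<Rightarrow> nat \<Rightarrow> bool" where
  "bit_tournament k u v \<longleftrightarrow> u < 2 ^ k + k \<and> v < 2 ^ k + k \<and> u \<noteq> v \<and>
     (if u < k \<and> k \<le> v then bit (v - k) u
      else if v < k \<and> k \<le> u then \<not> bit (u - k) v
      else u < v)"

lemma orientation_bit_tournament:
  "orientation (complete_graph (2 ^ k + k)) (bit_tournament k)"
  unfolding orientation_def complete_graph_def bit_tournament_def by auto

lemma bit_differs_if_neq:
  fixes m m' :: nat
  assumes "m < 2 ^ k" "m' < 2 ^ k" "m \<noteq> m'"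
  shows "\<exists>a<k. bit m a \<noteq> bit m' a"
proof (rule ccontr)
  assume "\<not> ?thesis"
  then have "take_bit k m = take_bit k m'"
    by (auto simp: bit_eq_iff bit_take_bit_iff)
  with assms show False by (simp add: take_bit_nat_eq_self)
qed

lemma adjacency_resolving_bit_tournament:
  "adjacency_resolving {..<2 ^ k + k} (bit_tournament k) {..<k}"
  unfolding adjacency_resolving_def
proof (intro conjI ballI impI)
  fix x y assume xy: "x \<in> {..<2 ^ k + k}" "y \<in> {..<2 ^ k + k}" "x \<noteq> y"
  show "\<exists>z\<in>{..<k}. dist_trunc (bit_tournament k) 1 z x \<noteq> dist_trunc (bit_tournament k) 1 z y"
  proof (cases "x < k \<or> y < k")
    case True
    with xy dist_trunc_1_distinguishes_self show ?thesis
      by (metis lessThan_iff)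
  next
    case False
    with xy have "x - k < 2 ^ k" "y - k < 2 ^ k" "x - k \<noteq> y - k" by auto
    then obtain a where a: "a < k" "bit (x - k) a \<noteq> bit (y - k) a"
      using bit_differs_if_neq by blast
    with xy False have "bit_tournament k a x \<noteq> bit_tournament k a y"
      by (auto simp: bit_tournament_def)
    with a False show ?thesis by auto
  qed
qed simp

theorem theorem5p4:
  fixes k :: nat
  assumes "k \<ge> 1"
  shows "\<exists>(V::nat set) E D. simple_graph V E \<and> orientation E D
    \<and> adim V E \<ge> bdim V E \<and> bdim V E = 2 ^ k + k - 1
    \<and> k \<ge> adim V D \<and> adim V D \<ge> bdim V D"
proof (intro exI conjI)
  let ?V = "{..<2 ^ k + k}"
  show "simple_graph ?V (complete_graph (2 ^ k + k))"
    by (rule simple_graph_complete_graph)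
  show "orientation (complete_graph (2 ^ k + k)) (bit_tournament k)"
    by (rule orientation_bit_tournament)
  show "bdim ?V (complete_graph (2 ^ k + k)) = 2 ^ k + k - 1"
    by (rule bdim_complete_graph) simp
  show "adim ?V (bit_tournament k) \<le> k"
    using adim_le[OF adjacency_resolving_bit_tournament] by simp
  show "bdim ?V (complete_graph (2 ^ k + k)) \<le> adim ?V (complete_graph (2 ^ k + k))"
    "bdim ?V (bit_tournament k) \<le> adim ?V (bit_tournament k)"
    by (simp_all add: bdim_le_adim)
qed

end
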